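(* Let $\{x,\xi\}$ be a line congruence, where $x:U\to\mathbb{R}^3$ is smooth, $U\subset\mathbb{R}^2$ open, and $\xi:U\to S^2$ is a proper frontal. Let $\Omega=(w_1\ w_2)$ be a tangent moving basis of $\xi$ and write $D\xi=\Omega\Delta_\Omega^T$ with $\Delta_\Omega=(\delta_{ij})$. \begin{enumerate} \item A curve $(u_1(t),u_2(t))$ in $U$ is a Kummer principal line if and only if it is a solution of \[ C_1 b_1^2 + C_2 b_1 b_2 + C_3 b_2^2 = 0 \quad\text{for all } t, \] where $\begin{pmatrix} b_1\\ b_2\end{pmatrix}=\Delta_\Omega^T\begin{pmatrix} u_1'\\ u_2'\end{pmatrix}$ and \begin{align*} C_1 &= 2\mathscr{F}_\Omega(\delta_{22}\mathscr{L}_\Omega-\delta_{12}\mathscr{M}_{1\Omega}) - \mathscr{E}_\Omega(\delta_{11}\mathscr{M}_{1\Omega}-\delta_{21}\mathscr{L}_\Omega+\delta_{22}\mathscr{M}_{2\Omega}-\delta_{12}\mathscr{N}_\Omega),\\ C_2 &= 2\mathscr{G}_\Omega(\delta_{22}\mathscr{L}_\Omega-\delta_{12}\mathscr{M}_{1\Omega}) - 2\mathscr{E}_\Omega(\delta_{11}\mathscr{N}_\Omega-\delta_{21}\mathscr{M}_{2\Omega}),\\ C_3 &= \mathscr{G}_\Omega(\delta_{11}\mathscr{M}_{1\Omega}-\delta_{21}\mathscr{L}_\Omega+\delta_{22}\mathscr{M}_{2\Omega}-\delta_{12}\mathscr{N}_\Omega) - 2\mathscr{F}_\Omega(\delta_{11}\mathscr{N}_\Omega-\delta_{21}\mathscr{M}_{2\Omega}).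 \end{align*} This equation is called the equation of principal surfaces of the congruence. \item If the congruence is normal, then the equation of principal surfaces can be written as \[ \begin{pmatrix} u_1' & u_2'\end{pmatrix}\Delta_\Omega\,\mathbf{P}\,\mathrm{adj}(\bm{\mathcal{II}}_\Omega)^T\Delta_\Omega\bm{\mathcal{I}}_\Omega\Delta_\Omega^T\begin{pmatrix} u_1'\\ u_2'\end{pmatrix}=0,\qquad \mathbf{P}=\begin{pmatrix}0&1\\-1&0\end{pmatrix}. \] \end{enumerate}
   Context: A frontal is a smooth map $\xi:U\to\mathbb{R}^3$ admitting locally a unit normal vector field; it is proper if its singular set $\Sigma(\xi)$ has empty interior. A tangent moving basis of $\xi$ is a smooth map $\Omega=(w_1\ w_2):U\to M_{3\times2}(\mathbb{R})$ with linearly independent columns such that $\xi_{u_1},\xi_{u_2}\in\mathrm{span}(w_1,w_2)=P_\Omega$; then $D\xi=\Omega\Delta_\Omega^T$ for a unique $\Delta_\Omega:U\to M_{2\times2}(\mathbb{R})$. The $\Omega$-Kummer fundamental forms have coefficients $\mathscr{E}_\Omega=\langle w_1,w_1\rangle$, $\mathscr{F}_\Omega=\langle w_1,w_2\rangle$, $\mathscr{G}_\Omega=\langle w_2,w_2\rangle$ (matrix $\bm{\mathcal{I}}_\Omega=\Omega^T\Omega$), and $\mathscr{L}_\Omega=-\langle x_{u_1},w_1\rangle$, $\mathscr{M}_{2\Omega}=-\langle x_{u_1},w_2\rangle$, $\mathscr{M}_{1\Omega}=-\langle x_{u_2},w_1\rangle$, $\mathscr{N}_\Omega=-\langle x_{u_2},w_2\rangle$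 (matrix $\bm{\mathcal{II}}_\Omega=-\Omega^TDx$). For $q\in U$ define $\mathscr{K}_q^\Omega(b_1,b_2)=\dfrac{b^T\bm{\mathcal{II}}_\Omega\,\mathrm{adj}(\Delta_\Omega^T)b}{b^T\bm{\mathcal{I}}_\Omega b}$, $b=(b_1,b_2)^T$, $\mathrm{adj}$ the adjugate matrix. A direction $b_1w_1+b_2w_2\in P_\Omega$ is a Kummer principal direction if $\mathscr{K}_q^\Omega(b_1,b_2)$ is an extreme value of $\mathscr{K}_q^\Omega$. For a smooth curve $\alpha(t)=(u_1(t),u_2(t))$ in $U$, the ruled surface $Y(t,v)=x(\alpha(t))+v\xi(\alpha(t))$ is a principal surface if for every $t$ with $(b_1,b_2)^T=\Delta_\Omega^T(u_1',u_2')^T\neq 0$, $(b_1,b_2)$ determines a Kummer principal direction; $\alpha$ (or the directrix curve) is then called a Kummer principal line. The congruence is normal if there is a surface whose normal lines are parallel to the lines of the congruence; equivalently, $\bm{\mathcal{II}}_\Omega\,\mathrm{adj}(\Delta_\Omega^T)$ is symmetric. *)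

theory Defs
  imports "HOL-Analysis.Analysis"
begin

fun Ck_on :: "nat \<Rightarrow> 'a::euclidean_space set \<Rightarrow> ('a \<Rightarrow> 'b::real_normed_vector) \<Rightarrow> bool" where
  "Ck_on 0 S f = continuous_on S f"
| "Ck_on (Suc k) S f =
     (continuous_on S f \<and> (\<forall>q\<in>S. f differentiable (at q)) \<and>
      (\<forall>i\<in>Basis. Ck_on k S (\<lambda>q. frechet_derivative f (at q) i)))"

definition smooth_on :: "'a::euclidean_space set \<Rightarrow> ('a \<Rightarrow> 'b::real_normed_vector) \<Rightarrow> bool" where
  "smooth_on S f \<longleftrightarrow> (\<forall>k. Ck_on k S f)"

definition jac :: "(real^2 \<Rightarrow> real^3) \<Rightarrow> real^2 \<Rightarrow> real^2^3" where
  "jac f q = matrix (frechet_derivative f (at q))"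

definition du :: "(real^2 \<Rightarrow> real^3) \<Rightarrow> 2 \<Rightarrow> real^2 \<Rightarrow> real^3" where
  "du f i q = frechet_derivative f (at q) (axis i 1)"

definition adj2 :: "real^2^2 \<Rightarrow> real^2^2" where
  "adj2 A = vector [vector [A$2$2, - A$1$2], vector [- A$2$1, A$1$1]]"

definition Pmat :: "real^2^2" where
  "Pmat = vector [vector [0, 1], vector [-1, 0]]"

definition singular_set :: "(real^2) set \<Rightarrow> (real^2 \<Rightarrow> real^3) \<Rightarrow> (real^2) set" where
  "singular_set U f = {q\<in>U. rank (jac f q) < 2}"

definition frontal :: "(real^2) set \<Rightarrow> (real^2 \<Rightarrow> real^3) \<Rightarrow> bool" where
  "frontal U f \<longleftrightarrow> smooth_on U f \<and>
     (\<forall>q\<in>U. \<exists>V \<nu>. open V \<and> q \<in> V \<and> V \<subseteq> U \<and> smooth_on V \<nu> \<and>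
        (\<forall>p\<in>V. norm (\<nu> p) = 1 \<and> \<nu> p \<bullet> du f 1 p = 0 \<and> \<nu> p \<bullet> du f 2 p = 0))"

definition proper_frontal :: "(real^2) set \<Rightarrow> (real^2 \<Rightarrow> real^3) \<Rightarrow> bool" where
  "proper_frontal U f \<longleftrightarrow> frontal U f \<and> interior (singular_set U f) = {}"

definition line_congruence :: "(real^2) set \<Rightarrow> (real^2 \<Rightarrow> real^3) \<Rightarrow> (real^2 \<Rightarrow> real^3) \<Rightarrow> bool" where
  "line_congruence U x \<xi> \<longleftrightarrow> open U \<and> smooth_on U x \<and> (\<forall>q\<in>U. norm (\<xi> q) = 1) \<and>
     proper_frontal U \<xi>"

definition w1 :: "(real^2 \<Rightarrow> real^2^3) \<Rightarrow> real^2 \<Rightarrow> real^3" where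
  "w1 \<Omega> q = column 1 (\<Omega> q)"

definition w2 :: "(real^2 \<Rightarrow> real^2^3) \<Rightarrow> real^2 \<Rightarrow> real^3" where
  "w2 \<Omega> q = column 2 (\<Omega> q)"

definition tangent_moving_basis :: "(real^2) set \<Rightarrow> (real^2 \<Rightarrow> real^3) \<Rightarrow> (real^2 \<Rightarrow> real^2^3) \<Rightarrow> bool" where
  "tangent_moving_basis U \<xi> \<Omega> \<longleftrightarrow> smooth_on U \<Omega> \<and>
     (\<forall>q\<in>U. (\<forall>c1 c2. c1 *\<^sub>R w1 \<Omega> q + c2 *\<^sub>R w2 \<Omega> q = 0 \<longrightarrow> c1 = 0 \<and> c2 = 0) \<and>
            du \<xi> 1 q \<in> span {w1 \<Omega> q, w2 \<Omega> q} \<and> du \<xi> 2 q \<in> span {w1 \<Omega> q, w2 \<Omega> q})"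

definition kE :: "(real^2 \<Rightarrow> real^2^3) \<Rightarrow> real^2 \<Rightarrow> real" where
  "kE \<Omega> q = w1 \<Omega> q \<bullet> w1 \<Omega> q"
definition kF :: "(real^2 \<Rightarrow> real^2^3) \<Rightarrow> real^2 \<Rightarrow> real" where
  "kF \<Omega> q = w1 \<Omega> q \<bullet> w2 \<Omega> q"
definition kG :: "(real^2 \<Rightarrow> real^2^3) \<Rightarrow> real^2 \<Rightarrow> real" where
  "kG \<Omega> q = w2 \<Omega> q \<bullet> w2 \<Omega> q"
definition kL :: "(real^2 \<Rightarrow> real^2^3) \<Rightarrow> (real^2 \<Rightarrow> real^3) \<Rightarrow> real^2 \<Rightarrow> real" where
  "kL \<Omega> x q = - (du x 1 q \<bullet> w1 \<Omega> q)"
definition kM2 :: "(real^2 \<Rightarrow> real^2^3) \<Rightarrow> (real^2 \<Rightarrow> real^3) \<Rightarrow> real^2 \<Rightarrow> real" where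
  "kM2 \<Omega> x q = - (du x 1 q \<bullet> w2 \<Omega> q)"
definition kM1 :: "(real^2 \<Rightarrow> real^2^3) \<Rightarrow> (real^2 \<Rightarrow> real^3) \<Rightarrow> real^2 \<Rightarrow> real" where
  "kM1 \<Omega> x q = - (du x 2 q \<bullet> w1 \<Omega> q)"
definition kN :: "(real^2 \<Rightarrow> real^2^3) \<Rightarrow> (real^2 \<Rightarrow> real^3) \<Rightarrow> real^2 \<Rightarrow> real" where
  "kN \<Omega> x q = - (du x 2 q \<bullet> w2 \<Omega> q)"

definition kI :: "(real^2 \<Rightarrow> real^2^3) \<Rightarrow> real^2 \<Rightarrow> real^2^2" where
  "kI \<Omega> q = transpose (\<Omega> q) ** \<Omega> q"
definition kII :: "(real^2 \<Rightarrow> real^2^3) \<Rightarrow> (real^2 \<Rightarrow> real^3) \<Rightarrow> real^2 \<Rightarrow> real^2^2" where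
  "kII \<Omega> x q = - (transpose (\<Omega> q) ** jac x q)"

definition kummerK :: "(real^2 \<Rightarrow> real^2^3) \<Rightarrow> (real^2 \<Rightarrow> real^2^2) \<Rightarrow> (real^2 \<Rightarrow> real^3) \<Rightarrow> real^2 \<Rightarrow> real^2 \<Rightarrow> real" where
  "kummerK \<Omega> \<Delta> x q b =
     (b \<bullet> ((kII \<Omega> x q ** adj2 (transpose (\<Delta> q))) *v b)) / (b \<bullet> (kI \<Omega> q *v b))"

definition kummer_principal_direction :: "(real^2 \<Rightarrow> real^2^3) \<Rightarrow> (real^2 \<Rightarrow> real^2^2) \<Rightarrow> (real^2 \<Rightarrow> real^3) \<Rightarrow> real^2 \<Rightarrow> real^2 \<Rightarrow> bool" where
  "kummer_principal_direction \<Omega> \<Delta> x q b \<longleftrightarrow> b \<noteq> 0 \<and>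
     ((\<forall>c. c \<noteq> 0 \<longrightarrow> kummerK \<Omega> \<Delta> x q c \<le> kummerK \<Omega> \<Delta> x q b) \<or>
      (\<forall>c. c \<noteq> 0 \<longrightarrow> kummerK \<Omega> \<Delta> x q b \<le> kummerK \<Omega> \<Delta> x q c))"

text \<open>A curve alpha : J -> U is a Kummer principal line (the ruled surface
  Y(t,v) = x(alpha t) + v xi(alpha t) is a principal surface).\<close>
definition kummer_principal_line :: "(real^2 \<Rightarrow> real^2^3) \<Rightarrow> (real^2 \<Rightarrow> real^2^2) \<Rightarrow> (real^2 \<Rightarrow> real^3) \<Rightarrow> real set \<Rightarrow> (real \<Rightarrow> real^2) \<Rightarrow> bool" where
  "kummer_principal_line \<Omega> \<Delta> x J \<alpha> \<longleftrightarrow>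
     (\<forall>t\<in>J. transpose (\<Delta> (\<alpha> t)) *v vector_derivative \<alpha> (at t) \<noteq> 0 \<longrightarrow>
        kummer_principal_direction \<Omega> \<Delta> x (\<alpha> t) (transpose (\<Delta> (\<alpha> t)) *v vector_derivative \<alpha> (at t)))"

definition C1 :: "(real^2 \<Rightarrow> real^2^3) \<Rightarrow> (real^2 \<Rightarrow> real^2^2) \<Rightarrow> (real^2 \<Rightarrow> real^3) \<Rightarrow> real^2 \<Rightarrow> real" where
  "C1 \<Omega> \<Delta> x q =
     2 * kF \<Omega> q * (\<Delta> q$2$2 * kL \<Omega> x q - \<Delta> q$1$2 * kM1 \<Omega> x q)
     - kE \<Omega> q * (\<Delta> q$1$1 * kM1 \<Omega> x q - \<Delta> q$2$1 * kL \<Omega> x q + \<Delta> q$2$2 * kM2 \<Omega> x q - \<Delta> q$1$2 * kN \<Omega> x q)"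

definition C2 :: "(real^2 \<Rightarrow> real^2^3) \<Rightarrow> (real^2 \<Rightarrow> real^2^2) \<Rightarrow> (real^2 \<Rightarrow> real^3) \<Rightarrow> real^2 \<Rightarrow> real" where
  "C2 \<Omega> \<Delta> x q =
     2 * kG \<Omega> q * (\<Delta> q$2$2 * kL \<Omega> x q - \<Delta> q$1$2 * kM1 \<Omega> x q)
     - 2 * kE \<Omega> q * (\<Delta> q$1$1 * kN \<Omega> x q - \<Delta> q$2$1 * kM2 \<Omega> x q)"

definition C3 :: "(real^2 \<Rightarrow> real^2^3) \<Rightarrow> (real^2 \<Rightarrow> real^2^2) \<Rightarrow> (real^2 \<Rightarrow> real^3) \<Rightarrow> real^2 \<Rightarrow> real" where
  "C3 \<Omega> \<Delta> x q =
     kG \<Omega> q * (\<Delta> q$1$1 * kM1 \<Omega> x q - \<Delta> q$2$1 * kL \<Omega> x q + \<Delta> q$2$2 * kM2 \<Omega> x q - \<Delta> q$1$2 * kN \<Omega> x q)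
     - 2 * kF \<Omega> q * (\<Delta> q$1$1 * kN \<Omega> x q - \<Delta> q$2$1 * kM2 \<Omega> x q)"

definition principal_eq :: "(real^2 \<Rightarrow> real^2^3) \<Rightarrow> (real^2 \<Rightarrow> real^2^2) \<Rightarrow> (real^2 \<Rightarrow> real^3) \<Rightarrow> real^2 \<Rightarrow> real^2 \<Rightarrow> real" where
  "principal_eq \<Omega> \<Delta> x q b =
     C1 \<Omega> \<Delta> x q * (b$1)^2 + C2 \<Omega> \<Delta> x q * (b$1 * b$2) + C3 \<Omega> \<Delta> x q * (b$2)^2"

text \<open>Normal congruence, via its characterisation: II_Omega adj(Delta_Omega^T) symmetric.\<close>
definition normal_congruence :: "(real^2) set \<Rightarrow> (real^2 \<Rightarrow> real^2^3) \<Rightarrow> (real^2 \<Rightarrow> real^2^2) \<Rightarrow> (real^2 \<Rightarrow> real^3) \<Rightarrow> bool" where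
  "normal_congruence U \<Omega> \<Delta> x \<longleftrightarrow>
     (\<forall>q\<in>U. transpose (kII \<Omega> x q ** adj2 (transpose (\<Delta> q))) = kII \<Omega> x q ** adj2 (transpose (\<Delta> q)))"

end

theory Submission
  imports Defs
begin

text \<open>
  At a point q, K_q is the Rayleigh quotient of the form b^T A b, A = II adj(Delta^T), with
  respect to the form I, which is positive definite because w1, w2 are independent. Put
  k = K_q(b) and M = A + A^T - 2k I. Then b is an extreme point of K_q exactly when the binary
  form c^T M c is semidefinite; since this form vanishes at b, that happens exactly when M b = 0
  (a semidefinite form vanishes only on its kernel, and a singular binary form is a multiple of
  a square). As b^T M b = 0 and b^T I b > 0, M b = 0 means that (A + A^T) b is parallel to I b,
  and the 2x2 determinant expressing this is C1 b1^2 + C2 b1 b2 + C3 b2^2. For a normal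
  congruence A is symmetric, and the determinant becomes twice the form of the second part.
\<close>

lemma binary_form_nonpos_vanishing_imp_kernel:
  fixes p q r b1 b2 :: real
  assumes nonpos: "\<And>c1 c2. p*c1^2 + 2*q*c1*c2 + r*c2^2 \<le> 0"
    and vanish: "p*b1^2 + 2*q*b1*b2 + r*b2^2 = 0"
  shows "p*b1 + q*b2 = 0 \<and> q*b1 + r*b2 = 0"
proof -
  have "p \<le> 0" using nonpos[of 1 0] by simp
  have disc: "q^2 \<le> p*r"
  proof (cases "p = 0")
    case True
    have "q = 0"
    proof (rule ccontr)
      assume "q \<noteq> 0"
      then show False using nonpos[of "(1 - r)/(2*q)" 1] True by (simp add: field_simps)
    qed
    with True show ?thesis by simp
  next
    case False
    have "p*(p*r - q^2) \<le> 0"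
      using nonpos[of q "-p"] by (simp add: power2_eq_square algebra_simps)
    with False \<open>p \<le> 0\<close> show ?thesis by (simp add: mult_le_0_iff)
  qed
  have "(p*b1 + q*b2)^2 + (p*r - q^2)*b2^2 = p*(p*b1^2 + 2*q*b1*b2 + r*b2^2)"
       "(q*b1 + r*b2)^2 + (p*r - q^2)*b1^2 = r*(p*b1^2 + 2*q*b1*b2 + r*b2^2)"
    by (simp_all add: power2_eq_square algebra_simps)
  then have "(p*b1 + q*b2)^2 + (p*r - q^2)*b2^2 = 0" "(q*b1 + r*b2)^2 + (p*r - q^2)*b1^2 = 0"
    using vanish by simp_all
  moreover have "0 \<le> (p*r - q^2)*b2^2" "0 \<le> (p*r - q^2)*b1^2"
    using disc by simp_all
  ultimately show ?thesis by (simp add: add_nonneg_eq_0_iff)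
qed

lemma singular_binary_form_semidefinite:
  fixes p q r :: real
  assumes "p*r = q^2"
  shows "(\<forall>c1 c2. p*c1^2 + 2*q*c1*c2 + r*c2^2 \<le> 0) \<or>
    (\<forall>c1 c2. 0 \<le> p*c1^2 + 2*q*c1*c2 + r*c2^2)"
proof (cases "p = 0")
  case True
  then have "q = 0" using assms by simp
  with True show ?thesis by (cases "r \<le> 0") (auto simp: mult_nonpos_nonneg)
next
  case False
  have "p * (p*c1^2 + 2*q*c1*c2 + r*c2^2) = (p*c1 + q*c2)^2" for c1 c2
    using assms by (simp add: power2_eq_square algebra_simps)
  then have "0 \<le> p * (p*c1^2 + 2*q*c1*c2 + r*c2^2)" for c1 c2 by simp
  with False show ?thesis by (cases "p < 0") (auto simp: zero_le_mult_iff)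
qed

lemma det_rows_2: "det (vector [u, v] :: real^2^2) = u$1 * v$2 - u$2 * v$1"
  by (simp add: det_2)

lemma inner_2: "(u::real^2) \<bullet> v = u$1 * v$1 + u$2 * v$2"
  by (simp add: inner_vec_def sum_2)

lemma quadratic_form_2:
  "(c::real^2) \<bullet> (A *v c) = A$1$1*(c$1)^2 + (A$1$2 + A$2$1)*(c$1*c$2) + A$2$2*(c$2)^2"
  by (simp add: inner_vec_def matrix_vector_mult_def sum_2 power2_eq_square algebra_simps)

lemma symmetric_semidefinite_vanishing_iff_kernel_2:
  fixes M :: "real^2^2" and b :: "real^2"
  assumes sym: "transpose M = M" and "b \<noteq> 0" and vanish: "b \<bullet> (M *v b) = 0"
  shows "((\<forall>c. c \<bullet> (M *v c) \<le> 0) \<or> (\<forall>c. 0 \<le> c \<bullet> (M *v c))) \<longleftrightarrow> M *v b = 0"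
proof -
  define p q r where "p = M$1$1" and "q = M$1$2" and "r = M$2$2"
  have "M$2$1 = q"
    using arg_cong[OF sym, of "\<lambda>N. N$1$2"] by (simp add: q_def transpose_def)
  then have form: "c \<bullet> (M *v c) = p*(c$1)^2 + 2*q*(c$1)*(c$2) + r*(c$2)^2" for c
    by (simp add: quadratic_form_2 p_def q_def r_def algebra_simps)
  have kernel: "M *v b = 0 \<longleftrightarrow> p*b$1 + q*b$2 = 0 \<and> q*b$1 + r*b$2 = 0"
    using \<open>M$2$1 = q\<close>
    by (simp add: vec_eq_iff forall_2 matrix_vector_mult_def sum_2 p_def q_def r_def)
  have vanish': "p*(b$1)^2 + 2*q*(b$1)*(b$2) + r*(b$2)^2 = 0"
    using vanish by (simp add: form)
  show ?thesis
  proof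
    assume "(\<forall>c. c \<bullet> (M *v c) \<le> 0) \<or> (\<forall>c. 0 \<le> c \<bullet> (M *v c))"
    then show "M *v b = 0"
    proof
      assume nonpos: "\<forall>c. c \<bullet> (M *v c) \<le> 0"
      have "p*c1^2 + 2*q*c1*c2 + r*c2^2 \<le> 0" for c1 c2
        using nonpos[rule_format, of "vector [c1, c2]"] by (simp add: form)
      from binary_form_nonpos_vanishing_imp_kernel[OF this vanish'] show ?thesis
        by (simp add: kernel)
    next
      assume nonneg: "\<forall>c. 0 \<le> c \<bullet> (M *v c)"
      have "(-p)*c1^2 + 2*(-q)*c1*c2 + (-r)*c2^2 \<le> 0" for c1 c2
        using nonneg[rule_format, of "vector [c1, c2]"] by (simp add: form)
      moreover have "(-p)*(b$1)^2 + 2*(-q)*(b$1)*(b$2) + (-r)*(b$2)^2 = 0"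
        using vanish' by simp
      ultimately show ?thesis
        using binary_form_nonpos_vanishing_imp_kernel[of "-p" "-q" "-r" "b$1" "b$2"]
        by (simp add: kernel)
    qed
  next
    assume "M *v b = 0"
    then have "p*b$1 + q*b$2 = 0" "q*b$1 + r*b$2 = 0" by (simp_all add: kernel)
    moreover have "(p*r - q^2) * b$1 = r*(p*b$1 + q*b$2) - q*(q*b$1 + r*b$2)"
      and "(p*r - q^2) * b$2 = p*(q*b$1 + r*b$2) - q*(p*b$1 + q*b$2)"
      by (simp_all add: power2_eq_square algebra_simps)
    ultimately have "p*r = q^2"
      using \<open>b \<noteq> 0\<close> by (auto simp: vec_eq_iff forall_2)
    from singular_binary_form_semidefinite[OF this]
    show "(\<forall>c. c \<bullet> (M *v c) \<le> 0) \<or> (\<forall>c. 0 \<le> c \<bullet> (M *v c))"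
      unfolding form by blast
  qed
qed

lemma orthogonal_parallel_imp_zero_2:
  fixes m n b :: "real^2"
  assumes "det (vector [m, n] :: real^2^2) = 0" and "m \<bullet> b = 0" and "n \<bullet> b \<noteq> 0"
  shows "m = 0"
proof -
  have "(n \<bullet> b) * m$1 = n$1 * (m \<bullet> b) + b$2 * det (vector [m, n] :: real^2^2)"
    and "(n \<bullet> b) * m$2 = n$2 * (m \<bullet> b) - b$1 * det (vector [m, n] :: real^2^2)"
    unfolding det_rows_2 inner_2 by (simp_all add: algebra_simps)
  with assms show ?thesis by (simp add: vec_eq_iff forall_2)
qed

lemma rayleigh_quotient_extremum_iff_2:
  fixes A B :: "real^2^2" and b :: "real^2"
  assumes B_sym: "transpose B = B" and B_pos: "\<And>c. c \<noteq> 0 \<Longrightarrow> 0 < c \<bullet> (B *v c)"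
    and "b \<noteq> 0"
  defines "\<rho> \<equiv> \<lambda>c. c \<bullet> (A *v c) / (c \<bullet> (B *v c))"
  shows "((\<forall>c. c \<noteq> 0 \<longrightarrow> \<rho> c \<le> \<rho> b) \<or> (\<forall>c. c \<noteq> 0 \<longrightarrow> \<rho> b \<le> \<rho> c))
    \<longleftrightarrow> det (vector [(A + transpose A) *v b, B *v b] :: real^2^2) = 0"
proof -
  define k where "k = \<rho> b"
  define M where "M = A + transpose A - (2*k) *\<^sub>R B"
  have M_sym: "transpose M = M"
    using B_sym by (simp add: M_def vec_eq_iff transpose_def)
  have form: "c \<bullet> (M *v c) = 2 * (c \<bullet> (A *v c) - k * (c \<bullet> (B *v c)))" for c
    by (simp add: M_def quadratic_form_2 transpose_def algebra_simps)
  have "0 < b \<bullet> (B *v b)" using B_pos \<open>b \<noteq> 0\<close> .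
  then have vanish: "b \<bullet> (M *v b) = 0"
    by (simp add: form k_def \<rho>_def)
  have "\<rho> c \<le> k \<longleftrightarrow> c \<bullet> (M *v c) \<le> 0" "k \<le> \<rho> c \<longleftrightarrow> 0 \<le> c \<bullet> (M *v c)" if "c \<noteq> 0" for c
    using B_pos[OF that] by (simp_all add: form \<rho>_def pos_divide_le_eq pos_le_divide_eq)
  then have "((\<forall>c. c \<noteq> 0 \<longrightarrow> \<rho> c \<le> \<rho> b) \<or> (\<forall>c. c \<noteq> 0 \<longrightarrow> \<rho> b \<le> \<rho> c))
      \<longleftrightarrow> (\<forall>c. c \<bullet> (M *v c) \<le> 0) \<or> (\<forall>c. 0 \<le> c \<bullet> (M *v c))"
    unfolding k_def[symmetric] by (metis inner_zero_left order_refl)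
  also have "\<dots> \<longleftrightarrow> M *v b = 0"
    by (rule symmetric_semidefinite_vanishing_iff_kernel_2[OF M_sym \<open>b \<noteq> 0\<close> vanish])
  also have "\<dots> \<longleftrightarrow> det (vector [(A + transpose A) *v b, B *v b] :: real^2^2) = 0"
  proof -
    have "det (vector [(A + transpose A) *v b, B *v b] :: real^2^2)
        = det (vector [M *v b, B *v b] :: real^2^2)"
      by (simp add: M_def det_rows_2 matrix_vector_mult_def sum_2 transpose_def algebra_simps)
    moreover have "(M *v b) \<bullet> b = 0" "(B *v b) \<bullet> b \<noteq> 0"
      using vanish \<open>0 < b \<bullet> (B *v b)\<close> by (simp_all add: inner_commute)
    ultimately show ?thesis
      using orthogonal_parallel_imp_zero_2[of "M *v b" "B *v b" b] by (auto simp: det_rows_2)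
  qed
  finally show ?thesis .
qed

lemma transpose_mult_nth: "(transpose A ** B)$i$j = column i A \<bullet> column j B"
  by (simp add: matrix_matrix_mult_def transpose_def column_def inner_vec_def mult.commute)

lemma kI_nth:
  "kI \<Omega> q $1$1 = kE \<Omega> q" "kI \<Omega> q $1$2 = kF \<Omega> q"
  "kI \<Omega> q $2$1 = kF \<Omega> q" "kI \<Omega> q $2$2 = kG \<Omega> q"
  by (simp_all add: kI_def transpose_mult_nth kE_def kF_def kG_def w1_def w2_def inner_commute)

lemma kII_nth:
  "kII \<Omega> x q $1$1 = kL \<Omega> x q" "kII \<Omega> x q $1$2 = kM1 \<Omega> x q"
  "kII \<Omega> x q $2$1 = kM2 \<Omega> x q" "kII \<Omega> x q $2$2 = kN \<Omega> x q"
  by (simp_all add: kII_def transpose_mult_nth column_def jac_def matrix_def du_def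
      kL_def kM1_def kM2_def kN_def w1_def w2_def inner_commute)

lemma kI_symmetric: "transpose (kI \<Omega> q) = kI \<Omega> q"
  by (simp add: kI_def matrix_transpose_mul)

lemma kI_positive_definite:
  assumes indep: "\<forall>c1 c2. c1 *\<^sub>R w1 \<Omega> q + c2 *\<^sub>R w2 \<Omega> q = 0 \<longrightarrow> c1 = 0 \<and> c2 = 0"
    and "c \<noteq> 0"
  shows "0 < c \<bullet> (kI \<Omega> q *v c)"
proof -
  have "c \<bullet> (kI \<Omega> q *v c) = c \<bullet> ((\<Omega> q *v c) v* \<Omega> q)"
    by (simp add: kI_def matrix_vector_mul_assoc[symmetric])
  also have "\<dots> = (\<Omega> q *v c) \<bullet> (\<Omega> q *v c)"
    by (metis dot_lmul_matrix inner_commute)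
  finally have "c \<bullet> (kI \<Omega> q *v c) = (\<Omega> q *v c) \<bullet> (\<Omega> q *v c)" .
  moreover have "\<Omega> q *v c = c$1 *\<^sub>R w1 \<Omega> q + c$2 *\<^sub>R w2 \<Omega> q"
    by (simp add: vec_eq_iff matrix_vector_mult_def sum_2 w1_def w2_def column_def mult.commute)
  moreover have "c$1 *\<^sub>R w1 \<Omega> q + c$2 *\<^sub>R w2 \<Omega> q \<noteq> 0"
  proof
    assume "c$1 *\<^sub>R w1 \<Omega> q + c$2 *\<^sub>R w2 \<Omega> q = 0"
    with indep have "c$1 = 0" "c$2 = 0" by blast+
    with \<open>c \<noteq> 0\<close> show False by (simp add: vec_eq_iff forall_2)
  qed
  ultimately show ?thesis by simp
qed

lemma adj2_transpose_mult_nth: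
  fixes M D :: "real^2^2"
  shows "(M ** adj2 (transpose D))$1$1 = M$1$1*D$2$2 - M$1$2*D$1$2"
    "(M ** adj2 (transpose D))$1$2 = M$1$2*D$1$1 - M$1$1*D$2$1"
    "(M ** adj2 (transpose D))$2$1 = M$2$1*D$2$2 - M$2$2*D$1$2"
    "(M ** adj2 (transpose D))$2$2 = M$2$2*D$1$1 - M$2$1*D$2$1"
  by (simp_all add: matrix_matrix_mult_def sum_2 adj2_def transpose_def algebra_simps)

lemma principal_eq_eq_det:
  fixes A :: "real^2^2"
  assumes "A = kII \<Omega> x q ** adj2 (transpose (\<Delta> q))"
  shows "principal_eq \<Omega> \<Delta> x q b =
     det (vector [(A + transpose A) *v b, kI \<Omega> q *v b] :: real^2^2)"
proof -
  have "det (vector [(A + transpose A) *v b, kI \<Omega> q *v b] :: real^2^2)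
      = (2*A$1$1*b$1 + (A$1$2 + A$2$1)*b$2) * (kF \<Omega> q*b$1 + kG \<Omega> q*b$2)
        - ((A$1$2 + A$2$1)*b$1 + 2*A$2$2*b$2) * (kE \<Omega> q*b$1 + kF \<Omega> q*b$2)"
    by (simp add: det_rows_2 matrix_vector_mult_def sum_2 transpose_def kI_nth)
  also have "\<dots> = principal_eq \<Omega> \<Delta> x q b"
    unfolding assms adj2_transpose_mult_nth kII_nth principal_eq_def C1_def C2_def C3_def
    by (simp add: power2_eq_square algebra_simps)
  finally show ?thesis ..
qed

lemma kummer_principal_direction_iff_principal_eq:
  assumes indep: "\<forall>c1 c2. c1 *\<^sub>R w1 \<Omega> q + c2 *\<^sub>R w2 \<Omega> q = 0 \<longrightarrow> c1 = 0 \<and> c2 = 0"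
    and "b \<noteq> 0"
  shows "kummer_principal_direction \<Omega> \<Delta> x q b \<longleftrightarrow> principal_eq \<Omega> \<Delta> x q b = 0"
  using rayleigh_quotient_extremum_iff_2[OF kI_symmetric kI_positive_definite[OF indep] \<open>b \<noteq> 0\<close>,
      of "kII \<Omega> x q ** adj2 (transpose (\<Delta> q))"] \<open>b \<noteq> 0\<close>
  unfolding kummer_principal_direction_def kummerK_def principal_eq_eq_det[OF refl] by simp

text \<open>For 2x2 matrices adj M = P^T M^T P and adj(D^T) P = P D, while v^T P w is the
  determinant with rows v and w.\<close>

lemma det_rows_transpose_adj2_eq_Pmat_form:
  fixes M N D :: "real^2^2" and u :: "real^2"
  shows "det (vector [transpose (M ** adj2 (transpose D)) *v (transpose D *v u),
                      N *v (transpose D *v u)] :: real^2^2)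
    = u \<bullet> ((D ** Pmat ** transpose (adj2 M) ** D ** N ** transpose D) *v u)"
  by (simp add: det_rows_2 inner_2 matrix_vector_mult_def matrix_matrix_mult_def sum_2 adj2_def
      Pmat_def transpose_def algebra_simps)

lemma principal_eq_eq_Pmat_form_if_symmetric:
  assumes sym: "transpose (kII \<Omega> x q ** adj2 (transpose (\<Delta> q)))
      = kII \<Omega> x q ** adj2 (transpose (\<Delta> q))"
  shows "principal_eq \<Omega> \<Delta> x q (transpose (\<Delta> q) *v u) =
    2 * (u \<bullet> ((\<Delta> q ** Pmat ** transpose (adj2 (kII \<Omega> x q)) ** \<Delta> q ** kI \<Omega> q
                  ** transpose (\<Delta> q)) *v u))"
proof -
  define A where "A = kII \<Omega> x q ** adj2 (transpose (\<Delta> q))"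
  define b where "b = transpose (\<Delta> q) *v u"
  have "principal_eq \<Omega> \<Delta> x q b
      = det (vector [(A + transpose A) *v b, kI \<Omega> q *v b] :: real^2^2)"
    using A_def by (rule principal_eq_eq_det)
  also have "\<dots> = det (vector [(transpose A + transpose A) *v b, kI \<Omega> q *v b] :: real^2^2)"
    using sym by (simp add: A_def)
  also have "\<dots> = 2 * det (vector [transpose A *v b, kI \<Omega> q *v b] :: real^2^2)"
    unfolding matrix_vector_mult_add_rdistrib det_rows_2 vector_add_component
    by (simp add: algebra_simps)
  also have "\<dots> = 2 * (u \<bullet> ((\<Delta> q ** Pmat ** transpose (adj2 (kII \<Omega> x q)) ** \<Delta> q ** kI \<Omega> q
                         ** transpose (\<Delta> q)) *v u))"
    unfolding A_def b_def det_rows_transpose_adj2_eq_Pmat_form ..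
  finally show ?thesis unfolding b_def .
qed

theorem proposition4p4:
  fixes U :: "(real^2) set" and x \<xi> :: "real^2 \<Rightarrow> real^3"
    and \<Omega> :: "real^2 \<Rightarrow> real^2^3" and \<Delta> :: "real^2 \<Rightarrow> real^2^2"
  assumes "open U"
    and "line_congruence U x \<xi>"
    and "tangent_moving_basis U \<xi> \<Omega>"
    and "\<forall>q\<in>U. jac \<xi> q = \<Omega> q ** transpose (\<Delta> q)"
  shows "(\<forall>(J::real set) (\<alpha>::real \<Rightarrow> real^2).
            is_interval J \<and> open J \<and> smooth_on J \<alpha> \<and> \<alpha> ` J \<subseteq> U \<longrightarrow>
            (kummer_principal_line \<Omega> \<Delta> x J \<alpha> \<longleftrightarrow>
             (\<forall>t\<in>J. principal_eq \<Omega> \<Delta> x (\<alpha> t)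
                        (transpose (\<Delta> (\<alpha> t)) *v vector_derivative \<alpha> (at t)) = 0)))
       \<and> (normal_congruence U \<Omega> \<Delta> x \<longrightarrow>
            (\<forall>q\<in>U. \<forall>u::real^2.
               principal_eq \<Omega> \<Delta> x q (transpose (\<Delta> q) *v u) = 0 \<longleftrightarrow>
               u \<bullet> ((\<Delta> q ** Pmat ** transpose (adj2 (kII \<Omega> x q)) ** \<Delta> q ** kI \<Omega> q
                       ** transpose (\<Delta> q)) *v u) = 0))"
proof (intro conjI allI impI ballI)
  \<comment> \<open>Both parts are pointwise linear algebra: of the hypotheses only the independence of
    w1, w2 is needed, the relation between D xi and Delta and the regularity of the curve are not.\<close>
  have direction_iff: "(b \<noteq> 0 \<longrightarrow> kummer_principal_direction \<Omega> \<Delta> x q b)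
      \<longleftrightarrow> principal_eq \<Omega> \<Delta> x q b = 0"
    if "q \<in> U" for q b
    using kummer_principal_direction_iff_principal_eq[of \<Omega> q b \<Delta> x] assms(3) that
    by (cases "b = 0") (auto simp: tangent_moving_basis_def principal_eq_def)
  fix J :: "real set" and \<alpha> :: "real \<Rightarrow> real^2"
  assume "is_interval J \<and> open J \<and> smooth_on J \<alpha> \<and> \<alpha> ` J \<subseteq> U"
  then show "kummer_principal_line \<Omega> \<Delta> x J \<alpha> \<longleftrightarrow>
      (\<forall>t\<in>J. principal_eq \<Omega> \<Delta> x (\<alpha> t)
                 (transpose (\<Delta> (\<alpha> t)) *v vector_derivative \<alpha> (at t)) = 0)"
    unfolding kummer_principal_line_def using direction_iff by blast
next
  fix q u
  assume "normal_congruence U \<Omega> \<Delta> x" and "q \<in> U"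
  then have "transpose (kII \<Omega> x q ** adj2 (transpose (\<Delta> q)))
      = kII \<Omega> x q ** adj2 (transpose (\<Delta> q))"
    by (simp add: normal_congruence_def)
  from principal_eq_eq_Pmat_form_if_symmetric[where \<Omega>=\<Omega> and \<Delta>=\<Delta> and x=x and q=q, OF this]
  show "principal_eq \<Omega> \<Delta> x q (transpose (\<Delta> q) *v u) = 0 \<longleftrightarrow>
      u \<bullet> ((\<Delta> q ** Pmat ** transpose (adj2 (kII \<Omega> x q)) ** \<Delta> q ** kI \<Omega> q
              ** transpose (\<Delta> q)) *v u) = 0"
    by simp
qed

end
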